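(* Let $(G,\mathcal{B}_1,\mathcal{B}_2)$ be a Rota-Baxter system of groups with cocycle $\Phi$. Then $\Phi(G)=G_{1_G}$, and every element $a\in\Phi(G)$ can be written uniquely as $a=a_1a_2$ with $(a_1,a_2)\in G_\Theta$.
   Context: A Rota-Baxter system of groups is a triple $(G,\mathcal{B}_1,\mathcal{B}_2)$ where $G$ is a group with identity $1_G$ and $\mathcal{B}_1,\mathcal{B}_2:G\to G$ are maps such that for all $a,b\in G$: $\mathcal{B}_1(a)\mathcal{B}_1(b)=\mathcal{B}_1(\mathcal{B}_1(a)b\mathcal{B}_2(a))$ and $\mathcal{B}_2(b)\mathcal{B}_2(a)=\mathcal{B}_2(\mathcal{B}_1(a)b\mathcal{B}_2(a))$. Descendent operation: $a\circ b=\mathcal{B}_1(a)b\mathcal{B}_2(a)$; cocycle: $\Phi(a)=\mathcal{B}_1(a)\mathcal{B}_2(a)$; $e_a=\mathcal{B}_1(a)^{-1}a\mathcal{B}_2(a)^{-1}$; $G_{1_G}=\{a\in G\mid a\circ e_{1_G}=a\}$. Let $\operatorname{Ker}(\mathcal{B}_i)=\{a\in G\mid \mathcal{B}_i(a)=1_G\}$, $G_1=\mathcal{B}_1(G)$, $G_2=\mathcal{B}_2(G)$ (these are subgroups of $G$), $H_1=\mathcal{B}_1(\operatorname{Ker}(\mathcal{B}_2))$, $H_2=\mathcal{B}_2(\operatorname{Ker}(\mathcal{B}_1))$ (these are normal subgroups of $G_1$, $G_2$ respectively). The map $\Theta:G_1/H_1\to G_2/H_2$, $\Theta(\mathcal{B}_1(a)H_1)=\mathcal{B}_2(a)H_2$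 ($a\in G$), is well defined. Set $G_\Theta=\{(a_1,a_2)\in G_1\times G_2\mid \Theta(a_1H_1)=a_2H_2\}$. *)

theory Defs
  imports "HOL-Algebra.Algebra"
begin

definition rota_baxter_system :: "('a, 'b) monoid_scheme \<Rightarrow> ('a \<Rightarrow> 'a) \<Rightarrow> ('a \<Rightarrow> 'a) \<Rightarrow> bool" where
  "rota_baxter_system G B1 B2 \<longleftrightarrow> group G
     \<and> (\<forall>a\<in>carrier G. B1 a \<in> carrier G \<and> B2 a \<in> carrier G)
     \<and> (\<forall>a\<in>carrier G. \<forall>b\<in>carrier G.
          B1 a \<otimes>\<^bsub>G\<^esub> B1 b = B1 (B1 a \<otimes>\<^bsub>G\<^esub> b \<otimes>\<^bsub>G\<^esub> B2 a)
        \<and> B2 b \<otimes>\<^bsub>G\<^esub> B2 a = B2 (B1 a \<otimes>\<^bsub>G\<^esub> b \<otimes>\<^bsub>G\<^esub> B2 a))"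

definition rbs_circ :: "('a, 'b) monoid_scheme \<Rightarrow> ('a \<Rightarrow> 'a) \<Rightarrow> ('a \<Rightarrow> 'a) \<Rightarrow> 'a \<Rightarrow> 'a \<Rightarrow> 'a" where
  "rbs_circ G B1 B2 a b = B1 a \<otimes>\<^bsub>G\<^esub> b \<otimes>\<^bsub>G\<^esub> B2 a"

definition rbs_Phi :: "('a, 'b) monoid_scheme \<Rightarrow> ('a \<Rightarrow> 'a) \<Rightarrow> ('a \<Rightarrow> 'a) \<Rightarrow> 'a \<Rightarrow> 'a" where
  "rbs_Phi G B1 B2 a = B1 a \<otimes>\<^bsub>G\<^esub> B2 a"

definition rbs_e :: "('a, 'b) monoid_scheme \<Rightarrow> ('a \<Rightarrow> 'a) \<Rightarrow> ('a \<Rightarrow> 'a) \<Rightarrow> 'a \<Rightarrow> 'a" where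
  "rbs_e G B1 B2 a = inv\<^bsub>G\<^esub> (B1 a) \<otimes>\<^bsub>G\<^esub> a \<otimes>\<^bsub>G\<^esub> inv\<^bsub>G\<^esub> (B2 a)"

definition rbs_G_one :: "('a, 'b) monoid_scheme \<Rightarrow> ('a \<Rightarrow> 'a) \<Rightarrow> ('a \<Rightarrow> 'a) \<Rightarrow> 'a set" where
  "rbs_G_one G B1 B2 = {a \<in> carrier G. rbs_circ G B1 B2 a (rbs_e G B1 B2 \<one>\<^bsub>G\<^esub>) = a}"

definition rbs_ker :: "('a, 'b) monoid_scheme \<Rightarrow> ('a \<Rightarrow> 'a) \<Rightarrow> 'a set" where
  "rbs_ker G B = {a \<in> carrier G. B a = \<one>\<^bsub>G\<^esub>}"

definition rbs_H1 :: "('a, 'b) monoid_scheme \<Rightarrow> ('a \<Rightarrow> 'a) \<Rightarrow> ('a \<Rightarrow> 'a) \<Rightarrow> 'a set" where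
  "rbs_H1 G B1 B2 = B1 ` rbs_ker G B2"

definition rbs_H2 :: "('a, 'b) monoid_scheme \<Rightarrow> ('a \<Rightarrow> 'a) \<Rightarrow> ('a \<Rightarrow> 'a) \<Rightarrow> 'a set" where
  "rbs_H2 G B1 B2 = B2 ` rbs_ker G B1"

text \<open>G_Theta = {(a1,a2) in G1 x G2 | Theta(a1 H1) = a2 H2}, where
  Theta(B1(a) H1) = B2(a) H2 (well defined, as in the paper).  Unfolding Theta via a
  representative: Theta(a1 H1) = a2 H2 iff for some a in G, a1 H1 = B1(a) H1 and
  a2 H2 = B2(a) H2.\<close>
definition rbs_G_Theta :: "('a, 'b) monoid_scheme \<Rightarrow> ('a \<Rightarrow> 'a) \<Rightarrow> ('a \<Rightarrow> 'a) \<Rightarrow> ('a \<times> 'a) set" where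
  "rbs_G_Theta G B1 B2 =
     {(a1, a2). a1 \<in> B1 ` carrier G \<and> a2 \<in> B2 ` carrier G \<and>
        (\<exists>a\<in>carrier G. a1 <#\<^bsub>G\<^esub> rbs_H1 G B1 B2 = B1 a <#\<^bsub>G\<^esub> rbs_H1 G B1 B2
                    \<and> a2 <#\<^bsub>G\<^esub> rbs_H2 G B1 B2 = B2 a <#\<^bsub>G\<^esub> rbs_H2 G B1 B2)}"

end

theory Submission
  imports Defs
begin

text \<open>The descendent operation \<open>a \<diamond> b = B\<^sub>1(a) b B\<^sub>2(a)\<close> is associative, \<open>B\<^sub>1\<close>
  turns it into the group product and \<open>B\<^sub>2\<close> into the opposite product.  The element
  \<open>e = e\<^sub>1\<close> is a left identity for \<open>\<diamond>\<close> with \<open>B\<^sub>1(e) = B\<^sub>2(e) = 1\<close>, and every element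
  has a right inverse; in particular \<open>1\<close> is invertible up to right multiplication by \<open>e\<close>.
  As \<open>\<Phi>(a) = a \<diamond> 1\<close>, the image of \<open>\<Phi>\<close> is the set of fixed points of \<open>x \<mapsto> x \<diamond> e\<close>,
  and \<open>\<Phi>(a)\<close> determines \<open>a \<diamond> e\<close>, hence \<open>(B\<^sub>1(a), B\<^sub>2(a))\<close>.  Finally every pair in
  \<open>G\<^sub>\<Theta>\<close> is of the form \<open>(B\<^sub>1(t), B\<^sub>2(t))\<close>: if \<open>a\<^sub>1 = B\<^sub>1(w) B\<^sub>1(k\<^sub>1)\<close> and
  \<open>a\<^sub>2 = B\<^sub>2(w) B\<^sub>2(k\<^sub>2)\<close> with \<open>k\<^sub>1 \<in> Ker B\<^sub>2\<close> and \<open>k\<^sub>2 \<in> Ker B\<^sub>1\<close>, take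
  \<open>t = k\<^sub>2 \<diamond> (w \<diamond> k\<^sub>1)\<close>.\<close>

lemma (in group) l_coset_eq_imp_right_factor:
  assumes "\<one> \<in> H" "a \<in> carrier G" "a <# H = b <# H"
  shows "\<exists>h\<in>H. a = b \<otimes> h"
proof -
  have "a \<in> a <# H"
    using assms(1,2) by (force simp: l_coset_def)
  then show ?thesis
    using assms(3) by (auto simp: l_coset_def)
qed

locale rb_system = group G for G (structure) +
  fixes B1 B2 :: "'a \<Rightarrow> 'a"
  assumes B1_closed: "a \<in> carrier G \<Longrightarrow> B1 a \<in> carrier G"
    and B2_closed: "a \<in> carrier G \<Longrightarrow> B2 a \<in> carrier G"
    and B1_mult: "a \<in> carrier G \<Longrightarrow> b \<in> carrier G \<Longrightarrow> B1 a \<otimes> B1 b = B1 (B1 a \<otimes> b \<otimes> B2 a)"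
    and B2_mult: "a \<in> carrier G \<Longrightarrow> b \<in> carrier G \<Longrightarrow> B2 b \<otimes> B2 a = B2 (B1 a \<otimes> b \<otimes> B2 a)"
begin

abbreviation circ (infixl "\<diamond>" 70) where "x \<diamond> y \<equiv> rbs_circ G B1 B2 x y"
abbreviation e where "e \<equiv> rbs_e G B1 B2 \<one>"
abbreviation Phi where "Phi \<equiv> rbs_Phi G B1 B2"

lemma circ_closed [simp]: "x \<in> carrier G \<Longrightarrow> y \<in> carrier G \<Longrightarrow> x \<diamond> y \<in> carrier G"
  by (simp add: rbs_circ_def B1_closed B2_closed)

lemma e_closed [simp]: "e \<in> carrier G"
  by (simp add: rbs_e_def B1_closed B2_closed)

lemma B1_circ: "x \<in> carrier G \<Longrightarrow> y \<in> carrier G \<Longrightarrow> B1 (x \<diamond> y) = B1 x \<otimes> B1 y"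
  by (simp add: rbs_circ_def B1_mult)

lemma B2_circ: "x \<in> carrier G \<Longrightarrow> y \<in> carrier G \<Longrightarrow> B2 (x \<diamond> y) = B2 y \<otimes> B2 x"
  by (simp add: rbs_circ_def B2_mult)

lemma circ_assoc:
  assumes "x \<in> carrier G" "y \<in> carrier G" "z \<in> carrier G"
  shows "x \<diamond> y \<diamond> z = x \<diamond> (y \<diamond> z)"
proof -
  have "x \<diamond> y \<diamond> z = (B1 x \<otimes> B1 y) \<otimes> z \<otimes> (B2 y \<otimes> B2 x)"
    using assms by (simp add: rbs_circ_def[of _ _ _ "x \<diamond> y"] B1_circ B2_circ)
  also have "\<dots> = x \<diamond> (y \<diamond> z)"
    using assms by (simp add: rbs_circ_def m_assoc B1_closed B2_closed)
  finally show ?thesis .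
qed

lemma Phi_eq_circ_one: "x \<in> carrier G \<Longrightarrow> Phi x = x \<diamond> \<one>"
  by (simp add: rbs_Phi_def rbs_circ_def B1_closed)

lemma one_circ_e: "\<one> \<diamond> e = \<one>"
  by (simp add: rbs_circ_def rbs_e_def m_assoc B1_closed B2_closed)

lemma B1_e: "B1 e = \<one>"
proof -
  have "B1 \<one> \<otimes> B1 e = B1 \<one> \<otimes> \<one>"
    using B1_circ[of \<one> e] by (simp add: one_circ_e B1_closed)
  then show ?thesis
    using l_cancel[of "B1 \<one>" "B1 e" \<one>] by (simp add: B1_closed)
qed

lemma B2_e: "B2 e = \<one>"
proof -
  have "B2 e \<otimes> B2 \<one> = \<one> \<otimes> B2 \<one>"
    using B2_circ[of \<one> e] by (simp add: one_circ_e B2_closed)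
  then show ?thesis
    using r_cancel[of "B2 \<one>" "B2 e" \<one>] by (simp add: B2_closed)
qed

lemma e_circ [simp]: "x \<in> carrier G \<Longrightarrow> e \<diamond> x = x"
  by (simp add: rbs_circ_def B1_e B2_e)

lemma B1_circ_e: "x \<in> carrier G \<Longrightarrow> B1 (x \<diamond> e) = B1 x"
  by (simp add: B1_circ B1_e B1_closed)

lemma B2_circ_e: "x \<in> carrier G \<Longrightarrow> B2 (x \<diamond> e) = B2 x"
  by (simp add: B2_circ B2_e B2_closed)

lemma circ_right_inverse: "x \<in> carrier G \<Longrightarrow> \<exists>y\<in>carrier G. x \<diamond> y = e"
proof
  assume x: "x \<in> carrier G"
  let ?y = "inv (B1 x) \<otimes> e \<otimes> inv (B2 x)"
  show "?y \<in> carrier G"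
    using x by (simp add: B1_closed B2_closed)
  show "x \<diamond> ?y = e"
    using x by (simp add: rbs_circ_def B1_closed B2_closed flip: m_assoc)
      (simp add: m_assoc B1_closed B2_closed)
qed

lemma circ_left_inverse_mod_e:
  assumes x: "x \<in> carrier G" and y: "y \<in> carrier G" and xy: "x \<diamond> y = e"
  shows "y \<diamond> x \<diamond> e = e"
proof -
  obtain z where z: "z \<in> carrier G" "y \<diamond> z = e"
    using circ_right_inverse[OF y] by blast
  have "y \<diamond> x \<diamond> e = y \<diamond> x \<diamond> (y \<diamond> z)"
    using z by simp
  also have "\<dots> = y \<diamond> (x \<diamond> y \<diamond> z)"
    using x y z by (simp add: circ_assoc)
  also have "\<dots> = e"
    using z by (simp add: xy)
  finally show ?thesis .
qed

lemma one_circ_invertible: "\<exists>r\<in>carrier G. \<one> \<diamond> r = e \<and> r \<diamond> \<one> = e"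
proof -
  obtain r where r: "r \<in> carrier G" "\<one> \<diamond> r = e"
    using circ_right_inverse[of \<one>] by blast
  have "r \<diamond> \<one> = r \<diamond> \<one> \<diamond> e"
    using r by (simp add: circ_assoc one_circ_e)
  also have "\<dots> = e"
    using circ_left_inverse_mod_e[of \<one> r] r by simp
  finally show ?thesis
    using r by blast
qed

lemma Phi_image_eq_G_one: "Phi ` carrier G = rbs_G_one G B1 B2"
proof (intro equalityI subsetI)
  fix a
  assume "a \<in> Phi ` carrier G"
  then show "a \<in> rbs_G_one G B1 B2"
    by (auto simp: rbs_G_one_def Phi_eq_circ_one circ_assoc one_circ_e)
next
  fix a
  assume "a \<in> rbs_G_one G B1 B2"
  then have a: "a \<in> carrier G" "a \<diamond> e = a"
    by (auto simp: rbs_G_one_def)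
  obtain r where r: "r \<in> carrier G" "r \<diamond> \<one> = e"
    using one_circ_invertible by blast
  have "Phi (a \<diamond> r) = a"
    using a r by (simp add: Phi_eq_circ_one circ_assoc)
  then show "a \<in> Phi ` carrier G"
    using a r by (metis circ_closed image_eqI)
qed

lemma Phi_eq_imp_B_eq:
  assumes x: "x \<in> carrier G" and y: "y \<in> carrier G" and "Phi x = Phi y"
  shows "B1 x = B1 y \<and> B2 x = B2 y"
proof -
  obtain r where r: "r \<in> carrier G" "\<one> \<diamond> r = e"
    using one_circ_invertible by blast
  have "x \<diamond> \<one> \<diamond> r = y \<diamond> \<one> \<diamond> r"
    using assms by (simp add: Phi_eq_circ_one)
  then have "x \<diamond> e = y \<diamond> e"
    using x y r by (simp add: circ_assoc)
  then show ?thesis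
    using x y by (metis B1_circ_e B2_circ_e)
qed

lemma G_Theta_eq_B_image: "rbs_G_Theta G B1 B2 = (\<lambda>t. (B1 t, B2 t)) ` carrier G"
proof (intro equalityI subsetI)
  fix p
  assume "p \<in> rbs_G_Theta G B1 B2"
  then obtain a1 a2 w where p: "p = (a1, a2)" and a: "a1 \<in> carrier G" "a2 \<in> carrier G"
    and w: "w \<in> carrier G"
    and coset1: "a1 <# rbs_H1 G B1 B2 = B1 w <# rbs_H1 G B1 B2"
    and coset2: "a2 <# rbs_H2 G B1 B2 = B2 w <# rbs_H2 G B1 B2"
    by (auto simp: rbs_G_Theta_def B1_closed B2_closed)
  have "\<one> \<in> rbs_H1 G B1 B2" "\<one> \<in> rbs_H2 G B1 B2"
    by (auto simp: rbs_H1_def rbs_H2_def rbs_ker_def B1_e B2_e intro!: image_eqI[of _ _ e])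
  then obtain h1 h2 where "h1 \<in> rbs_H1 G B1 B2" "a1 = B1 w \<otimes> h1"
    and "h2 \<in> rbs_H2 G B1 B2" "a2 = B2 w \<otimes> h2"
    using l_coset_eq_imp_right_factor[OF _ a(1) coset1]
      l_coset_eq_imp_right_factor[OF _ a(2) coset2] by blast
  then obtain k1 k2 where k1: "k1 \<in> carrier G" "B2 k1 = \<one>" "a1 = B1 w \<otimes> B1 k1"
    and k2: "k2 \<in> carrier G" "B1 k2 = \<one>" "a2 = B2 w \<otimes> B2 k2"
    unfolding rbs_H1_def rbs_H2_def rbs_ker_def by blast
  let ?t = "k2 \<diamond> (w \<diamond> k1)"
  have "B1 ?t = a1" "B2 ?t = a2"
    using k1 k2 w by (simp_all add: B1_circ B2_circ B1_closed B2_closed m_assoc)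
  moreover have "?t \<in> carrier G"
    using k1 k2 w by simp
  ultimately show "p \<in> (\<lambda>t. (B1 t, B2 t)) ` carrier G"
    unfolding p by (intro image_eqI[where x = ?t]) simp_all
next
  fix p
  assume "p \<in> (\<lambda>t. (B1 t, B2 t)) ` carrier G"
  then show "p \<in> rbs_G_Theta G B1 B2"
    by (auto simp: rbs_G_Theta_def)
qed

end

lemma rota_baxter_system_imp_rb_system:
  "rota_baxter_system G B1 B2 \<Longrightarrow> rb_system G B1 B2"
  unfolding rota_baxter_system_def rb_system_def rb_system_axioms_def by blast

theorem theorem5p7:
  fixes G (structure) and B1 B2 :: "'a \<Rightarrow> 'a"
  assumes "rota_baxter_system G B1 B2"
  shows "rbs_Phi G B1 B2 ` carrier G = rbs_G_one G B1 B2
       \<and> (\<forall>a \<in> rbs_Phi G B1 B2 ` carrier G.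
            \<exists>!p. p \<in> rbs_G_Theta G B1 B2 \<and> a = fst p \<otimes> snd p)"
proof (intro conjI ballI)
  interpret rb_system G B1 B2
    using assms by (rule rota_baxter_system_imp_rb_system)
  show "Phi ` carrier G = rbs_G_one G B1 B2"
    by (rule Phi_image_eq_G_one)
  fix a
  assume "a \<in> Phi ` carrier G"
  then obtain b where b: "b \<in> carrier G" "a = B1 b \<otimes> B2 b"
    by (auto simp: rbs_Phi_def)
  show "\<exists>!p. p \<in> rbs_G_Theta G B1 B2 \<and> a = fst p \<otimes> snd p"
  proof (rule ex1I[of _ "(B1 b, B2 b)"])
    show "(B1 b, B2 b) \<in> rbs_G_Theta G B1 B2 \<and> a = fst (B1 b, B2 b) \<otimes> snd (B1 b, B2 b)"
      using b by (simp add: G_Theta_eq_B_image)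
  next
    fix p
    assume "p \<in> rbs_G_Theta G B1 B2 \<and> a = fst p \<otimes> snd p"
    then obtain t where t: "t \<in> carrier G" "p = (B1 t, B2 t)" "Phi t = Phi b"
      using b by (auto simp: G_Theta_eq_B_image rbs_Phi_def)
    then show "p = (B1 b, B2 b)"
      using Phi_eq_imp_B_eq[OF t(1) b(1)] by simp
  qed
qed

end
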